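(* Let $n\in\mathbb N$, let $W,M$ be disjoint sets with $|W|=|M|=2n$, let $p\in W\cup M$, and let $D=\{(i,j)\in\{1,\dots,n\}^2: i\ne j\}$. There exist functions $\succ_W:\{0,1\}^D\to\mathcal P(W,M)$ and $\succ_M:\{0,1\}^D\to\mathcal P(M,W)$ such that for all $\bar x=(x^i_j)_{(i,j)\in D}$ and $\bar y=(y^i_j)_{(i,j)\in D}$ in $\{0,1\}^D$, the following are equivalent: (1) $p$ is single in some stable marriage with respect to $\succ_W(\bar x)$ and $\succ_M(\bar y)$; (2) $\mathrm{DISJ}(\bar x,\bar y)\ne0$.
   Context: $\mathcal P(A,B)$ is the set of profiles assigning to each $a\in A$ a preference list, i.e. a totally ordered subset of $B$ (others unacceptable). A participant prefers $x$ over $x'$ if $x$ precedes $x'$ on their list, or $x$ is on the list and $x'$ is not (being single counts as being matched to someone off the list). A marriage is a one-to-one map between a subset of $W$ and a subset of $M$; unmatched participants are single. A marriage is stable if every married participant is married to someone on their list and there is no blocking pair $(w,m)$ where $w$ prefers $m$ to her current situation and $m$ prefers $w$ to his. $\mathrm{DISJ}(\bar x,\bar y)=1$ if there is no $(i,j)$ with $x^i_j=y^i_j=1$, and $0$ otherwise. *)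

theory Defs
  imports Main
begin

text \<open>A preference list of a participant is a duplicate-free list of elements of the
other side (a totally ordered subset of B); elements not on the list are unacceptable.\<close>

definition profiles :: "'a set \<Rightarrow> 'a set \<Rightarrow> ('a \<Rightarrow> 'a list) set" where
  "profiles A B = {P. (\<forall>a\<in>A. distinct (P a) \<and> set (P a) \<subseteq> B) \<and> (\<forall>a. a \<notin> A \<longrightarrow> P a = [])}"

definition precedes :: "'a list \<Rightarrow> 'a \<Rightarrow> 'a \<Rightarrow> bool" where
  "precedes L x x' \<longleftrightarrow> (\<exists>i j. i < j \<and> j < length L \<and> L ! i = x \<and> L ! j = x')"

definition prefers :: "'a list \<Rightarrow> 'a \<Rightarrow> 'a \<Rightarrow> bool" where
  "prefers L x x' \<longleftrightarrow> precedes L x x' \<or> (x \<in> set L \<and> x' \<notin> set L)"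

text \<open>A participant with list L, whose current situation is given by the set of partners
Cur (empty = single, which counts as being matched to someone off the list), prefers x to
the current situation.\<close>
definition prefers_to_situation :: "'a list \<Rightarrow> 'a \<Rightarrow> 'a set \<Rightarrow> bool" where
  "prefers_to_situation L x Cur \<longleftrightarrow>
     (if Cur = {} then x \<in> set L else (\<forall>x'\<in>Cur. prefers L x x'))"

definition marriage :: "'a set \<Rightarrow> 'a set \<Rightarrow> ('a \<times> 'a) set \<Rightarrow> bool" where
  "marriage W M S \<longleftrightarrow> S \<subseteq> W \<times> M \<and>
     (\<forall>w m m'. (w, m) \<in> S \<longrightarrow> (w, m') \<in> S \<longrightarrow> m = m') \<and>
     (\<forall>w w' m. (w, m) \<in> S \<longrightarrow> (w', m) \<in> S \<longrightarrow> w = w')"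

definition stable_marriage ::
  "'a set \<Rightarrow> 'a set \<Rightarrow> ('a \<Rightarrow> 'a list) \<Rightarrow> ('a \<Rightarrow> 'a list) \<Rightarrow> ('a \<times> 'a) set \<Rightarrow> bool" where
  "stable_marriage W M PW PM S \<longleftrightarrow> marriage W M S \<and>
     (\<forall>(w, m)\<in>S. m \<in> set (PW w) \<and> w \<in> set (PM m)) \<and>
     \<not> (\<exists>w\<in>W. \<exists>m\<in>M.
          prefers_to_situation (PW w) m {m'. (w, m') \<in> S} \<and>
          prefers_to_situation (PM m) w {w'. (w', m) \<in> S})"

definition single :: "('a \<times> 'a) set \<Rightarrow> 'a \<Rightarrow> bool" where
  "single S p \<longleftrightarrow> p \<notin> Domain S \<and> p \<notin> Range S"

definition Dset :: "nat \<Rightarrow> (nat \<times> nat) set" where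
  "Dset n = {(i, j). i \<in> {1..n} \<and> j \<in> {1..n} \<and> i \<noteq> j}"

text \<open>{0,1}^D: bit vectors indexed by D (True = 1), extended by 0 outside D.\<close>
definition bitvecs :: "(nat \<times> nat) set \<Rightarrow> (nat \<times> nat \<Rightarrow> bool) set" where
  "bitvecs D = {x. \<forall>ij. ij \<notin> D \<longrightarrow> \<not> x ij}"

definition DISJ :: "(nat \<times> nat) set \<Rightarrow> (nat \<times> nat \<Rightarrow> bool) \<Rightarrow> (nat \<times> nat \<Rightarrow> bool) \<Rightarrow> nat" where
  "DISJ D x y = (if \<not> (\<exists>ij\<in>D. x ij \<and> y ij) then 1 else 0)"

end

theory Submission
  imports Defs
begin

text \<open>Enumerate the women as \<open>p = f 0\<close>, \<open>a\<^sub>i = f i\<close> (\<open>1 \<le> i \<le> n\<close>) and \<open>n - 1\<close> dummies,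
and the men as \<open>c\<^sub>i = g i\<close> and \<open>e\<^sub>j = g (n + j)\<close> (\<open>1 \<le> i, j \<le> n\<close>). The woman \<open>p\<close> accepts
exactly the \<open>c\<^sub>i\<close>; \<open>a\<^sub>i\<close> ranks the \<open>e\<^sub>j\<close> with \<open>x\<^sup>i\<^sub>j = 1\<close> above \<open>c\<^sub>i\<close>; \<open>c\<^sub>i\<close> ranks \<open>a\<^sub>i\<close> above \<open>p\<close>;
\<open>e\<^sub>j\<close> accepts the \<open>a\<^sub>i\<close> with \<open>y\<^sup>i\<^sub>j = 1\<close>. If \<open>p\<close> is single in a stable marriage, every \<open>c\<^sub>i\<close>
must be married (else \<open>(p, c\<^sub>i)\<close> blocks), hence to \<open>a\<^sub>i\<close>; then the \<open>e\<^sub>j\<close> are single and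
\<open>x\<^sup>i\<^sub>j = y\<^sup>i\<^sub>j = 1\<close> would make \<open>(a\<^sub>i, e\<^sub>j)\<close> a blocking pair. Conversely, for disjoint inputs
the marriage \<open>{(a\<^sub>i, c\<^sub>i)}\<close> is stable and leaves \<open>p\<close> single. If \<open>p\<close> is a man, exchange the
roles of the two sides.\<close>

lemma precedes_in_set: "precedes L x y \<Longrightarrow> x \<in> set L \<and> y \<in> set L"
  unfolding precedes_def by auto

lemma prefers_in_set: "prefers L x y \<Longrightarrow> x \<in> set L"
  unfolding prefers_def by (auto dest: precedes_in_set)

lemma not_prefers_self: "distinct L \<Longrightarrow> \<not> prefers L x x"
  unfolding prefers_def precedes_def by (auto simp: nth_eq_iff_index_eq)

lemma not_prefers_second_of_two: "a \<noteq> b \<Longrightarrow> \<not> prefers [a, b] b a"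
  unfolding prefers_def precedes_def by (auto simp: less_Suc_eq)

lemma prefers_append_last: "x \<in> set xs \<Longrightarrow> prefers (xs @ [y]) x y"
proof -
  assume "x \<in> set xs"
  then obtain t where "t < length xs" "xs ! t = x" by (auto simp: in_set_conv_nth)
  then have "precedes (xs @ [y]) x y"
    unfolding precedes_def by (intro exI[of _ t] exI[of _ "length xs"]) (auto simp: nth_append)
  then show ?thesis unfolding prefers_def ..
qed

lemma prefers_to_situation_empty [simp]: "prefers_to_situation L x {} \<longleftrightarrow> x \<in> set L"
  by (simp add: prefers_to_situation_def)

lemma prefers_to_situation_singleton [simp]: "prefers_to_situation L x {y} \<longleftrightarrow> prefers L x y"
  by (simp add: prefers_to_situation_def)

lemma profiles_distinct: "P \<in> profiles A B \<Longrightarrow> a \<in> A \<Longrightarrow> distinct (P a)"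
  unfolding profiles_def by blast

lemma stable_marriage_no_blocking_pair:
  assumes "stable_marriage W M PW PM S" "w \<in> W" "m \<in> M"
    and "prefers_to_situation (PW w) m {m'. (w, m') \<in> S}"
    and "prefers_to_situation (PM m) w {w'. (w', m) \<in> S}"
  shows False
  using assms unfolding stable_marriage_def by blast

lemma stable_marriage_partner_acceptable:
  assumes "stable_marriage W M PW PM S" "(w, m) \<in> S"
  shows "m \<in> set (PW w)" "w \<in> set (PM m)"
  using assms unfolding stable_marriage_def by auto

lemma stable_marriage_unique_partner:
  assumes "stable_marriage W M PW PM S"
  shows "(w, m) \<in> S \<Longrightarrow> (w, m') \<in> S \<Longrightarrow> m = m'"
    and "(w, m) \<in> S \<Longrightarrow> (w', m) \<in> S \<Longrightarrow> w = w'"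
  using assms unfolding stable_marriage_def marriage_def by blast+

lemma stable_marriage_converse:
  "stable_marriage M W PM PW (S\<inverse>) \<longleftrightarrow> stable_marriage W M PW PM S"
  unfolding stable_marriage_def marriage_def by auto

lemma single_converse: "single (S\<inverse>) p \<longleftrightarrow> single S p"
  unfolding single_def by auto

lemma ex_stable_single_swap_sides:
  "(\<exists>S. stable_marriage W M PW PM S \<and> single S p) \<longleftrightarrow> (\<exists>S. stable_marriage M W PM PW S \<and> single S p)"
proof
  assume "\<exists>S. stable_marriage W M PW PM S \<and> single S p"
  then obtain S where "stable_marriage W M PW PM S" "single S p" by blast
  then show "\<exists>S. stable_marriage M W PM PW S \<and> single S p"
    by (intro exI[of _ "S\<inverse>"]) (simp add: stable_marriage_converse single_converse)
next
  assume "\<exists>S. stable_marriage M W PM PW S \<and> single S p"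
  then obtain S where "stable_marriage M W PM PW S" "single S p" by blast
  then show "\<exists>S. stable_marriage W M PW PM S \<and> single S p"
    using stable_marriage_converse[of W M PW PM S]
    by (intro exI[of _ "S\<inverse>"]) (simp add: single_converse)
qed

lemma ex_bij_betw_nat_finite_fixing_zero:
  assumes "finite A" "p \<in> A"
  obtains f where "bij_betw f {0..<card A} A" "f 0 = p"
proof -
  obtain h where h: "bij_betw h {1..card (A - {p})} (A - {p})"
    using ex_bij_betw_nat_finite_1 assms(1) by blast
  define f where "f i = (if i = 0 then p else h i)" for i
  have "bij_betw f {1..card (A - {p})} (A - {p})"
    using h by (rule bij_betw_cong[THEN iffD1, rotated]) (simp add: f_def)
  moreover have "bij_betw f {0} {p}" by (simp add: f_def)
  ultimately have "bij_betw f ({0} \<union> {1..card (A - {p})}) ({p} \<union> (A - {p}))"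
    by (intro bij_betw_combine) auto
  moreover have "{0} \<union> {1..card (A - {p})} = {0..<card A}"
    using assms card_gt_0_iff[of A] by auto
  moreover have "{p} \<union> (A - {p}) = A" using assms(2) by auto
  ultimately show ?thesis using that f_def by simp
qed

lemma DISJ_Dset_ne_0_iff:
  assumes "x \<in> bitvecs (Dset n)"
  shows "DISJ (Dset n) x y \<noteq> 0 \<longleftrightarrow> \<not> (\<exists>i\<in>{1..n}. \<exists>j\<in>{1..n}. x (i, j) \<and> y (i, j))"
proof -
  have "\<not> x (i, i)" for i using assms unfolding bitvecs_def Dset_def by auto
  then have "(\<exists>ij\<in>Dset n. x ij \<and> y ij) \<longleftrightarrow> (\<exists>i\<in>{1..n}. \<exists>j\<in>{1..n}. x (i, j) \<and> y (i, j))"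
    unfolding Dset_def by blast
  then show ?thesis unfolding DISJ_def by simp
qed

lemma DISJ_commute: "DISJ D x y = DISJ D y x"
  unfolding DISJ_def by auto

definition women_prefs ::
  "nat \<Rightarrow> (nat \<Rightarrow> 'a) \<Rightarrow> (nat \<Rightarrow> 'a) \<Rightarrow> (nat \<times> nat \<Rightarrow> bool) \<Rightarrow> 'a \<Rightarrow> 'a list" where
  "women_prefs n f g x w =
     (if w \<notin> f ` {0..<2 * n} then []
      else let k = inv_into {0..<2 * n} f w in
        if k = 0 then map g [1..<n + 1]
        else if k \<le> n then map (\<lambda>j. g (n + j)) (filter (\<lambda>j. x (k, j)) [1..<n + 1]) @ [g k]
        else [])"

definition men_prefs ::
  "nat \<Rightarrow> (nat \<Rightarrow> 'a) \<Rightarrow> (nat \<Rightarrow> 'a) \<Rightarrow> (nat \<times> nat \<Rightarrow> bool) \<Rightarrow> 'a \<Rightarrow> 'a list" where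
  "men_prefs n f g y m =
     (if m \<notin> g ` {1..2 * n} then []
      else let l = inv_into {1..2 * n} g m in
        if l \<le> n then [f l, f 0] else map f (filter (\<lambda>i. y (i, l - n)) [1..<n + 1]))"

locale disj_gadget =
  fixes n :: nat and f g :: "nat \<Rightarrow> 'a" and A B :: "'a set"
  assumes n_pos: "1 \<le> n"
    and women_enum: "bij_betw f {0..<2 * n} A"
    and men_enum: "bij_betw g {1..2 * n} B"
    and sides_disjoint: "A \<inter> B = {}"
begin

lemma f_eq_iff: "i < 2 * n \<Longrightarrow> j < 2 * n \<Longrightarrow> f i = f j \<longleftrightarrow> i = j"
  using women_enum unfolding bij_betw_def by (meson atLeastLessThan_iff inj_on_eq_iff zero_le)

lemma g_eq_iff: "i \<in> {1..2 * n} \<Longrightarrow> j \<in> {1..2 * n} \<Longrightarrow> g i = g j \<longleftrightarrow> i = j"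
  using men_enum unfolding bij_betw_def by (meson inj_on_eq_iff)

lemma f_in_A: "k < 2 * n \<Longrightarrow> f k \<in> A"
  using bij_betwE women_enum by fastforce

lemma g_in_B: "l \<in> {1..2 * n} \<Longrightarrow> g l \<in> B"
  using bij_betwE men_enum by fastforce

lemma f_image: "f ` {0..<2 * n} = A"
  using women_enum by (simp add: bij_betw_def)

lemma g_image: "g ` {1..2 * n} = B"
  using men_enum by (simp add: bij_betw_def)

lemma inv_into_f: "k < 2 * n \<Longrightarrow> inv_into {0..<2 * n} f (f k) = k"
  using women_enum by (simp add: bij_betw_def inv_into_f_f)

lemma inv_into_g: "l \<in> {1..2 * n} \<Longrightarrow> inv_into {1..2 * n} g (g l) = l"
  using men_enum by (simp add: bij_betw_def inv_into_f_f)

lemma A_cases: assumes "w \<in> A" obtains k where "k < 2 * n" "w = f k"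
  using assms women_enum unfolding bij_betw_def by auto

lemma B_cases: assumes "m \<in> B" obtains l where "l \<in> {1..2 * n}" "m = g l"
  using assms men_enum unfolding bij_betw_def by auto

lemma women_prefs_p: "women_prefs n f g x (f 0) = map g [1..<n + 1]"
  using n_pos f_in_A[of 0] inv_into_f[of 0] by (simp add: women_prefs_def f_image)

lemma women_prefs_a:
  "1 \<le> k \<Longrightarrow> k \<le> n \<Longrightarrow>
   women_prefs n f g x (f k) = map (\<lambda>j. g (n + j)) (filter (\<lambda>j. x (k, j)) [1..<n + 1]) @ [g k]"
  using f_in_A[of k] inv_into_f[of k] by (simp add: women_prefs_def f_image)

lemma women_prefs_dummy: "n < k \<Longrightarrow> k < 2 * n \<Longrightarrow> women_prefs n f g x (f k) = []"
  using f_in_A[of k] inv_into_f[of k] by (simp add: women_prefs_def f_image)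

lemma men_prefs_c: "1 \<le> l \<Longrightarrow> l \<le> n \<Longrightarrow> men_prefs n f g y (g l) = [f l, f 0]"
  using g_in_B[of l] inv_into_g[of l] by (simp add: men_prefs_def g_image)

lemma men_prefs_e:
  "1 \<le> j \<Longrightarrow> j \<le> n \<Longrightarrow> men_prefs n f g y (g (n + j)) = map f (filter (\<lambda>i. y (i, j)) [1..<n + 1])"
  using g_in_B[of "n + j"] inv_into_g[of "n + j"] by (simp add: men_prefs_def g_image)

lemma women_prefs_profile: "women_prefs n f g x \<in> profiles A B"
proof -
  have "distinct (women_prefs n f g x (f k)) \<and> set (women_prefs n f g x (f k)) \<subseteq> B"
    if k: "k < 2 * n" for k
  proof -
    consider "k = 0" | "1 \<le> k" "k \<le> n" | "n < k" by linarith
    then show ?thesis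
    proof cases
      case 1
      then show ?thesis
        using g_eq_iff g_in_B by (auto simp: women_prefs_p distinct_map inj_on_def)
    next
      case 2
      have "g k \<noteq> g (n + j)" if "1 \<le> j" "j \<le> n" for j
        using g_eq_iff[of k "n + j"] 2 that by auto
      then have "g k \<notin> (\<lambda>j. g (n + j)) ` {1..n}" by force
      then show ?thesis
        using 2 g_eq_iff g_in_B by (auto simp: women_prefs_a distinct_map inj_on_def)
    next
      case 3
      then show ?thesis using k by (simp add: women_prefs_dummy)
    qed
  qed
  moreover have "women_prefs n f g x w = []" if "w \<notin> A" for w
    using that unfolding women_prefs_def f_image by simp
  ultimately show ?thesis unfolding profiles_def by (fastforce elim!: A_cases)
qed

lemma men_prefs_profile: "men_prefs n f g y \<in> profiles B A"
proof -
  have "distinct (men_prefs n f g y (g l)) \<and> set (men_prefs n f g y (g l)) \<subseteq> A"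
    if l: "l \<in> {1..2 * n}" for l
  proof (cases "l \<le> n")
    case True
    then show ?thesis using l men_prefs_c f_eq_iff[of l 0] f_in_A by auto
  next
    case False
    define j where "j = l - n"
    have "l = n + j" "1 \<le> j" "j \<le> n" using l False unfolding j_def by auto
    then show ?thesis
      using f_eq_iff f_in_A by (auto simp: men_prefs_e distinct_map inj_on_def)
  qed
  moreover have "men_prefs n f g y m = []" if "m \<notin> B" for m
    using that unfolding men_prefs_def g_image by simp
  ultimately show ?thesis unfolding profiles_def by (fastforce elim!: B_cases)
qed

lemma f_0_in_A: "f 0 \<in> A"
  using f_in_A n_pos by simp

lemma stable_single_p_marries_diagonal:
  assumes S: "stable_marriage A B (women_prefs n f g x) (men_prefs n f g y) S"
    and p_single: "single S (f 0)"
    and k: "1 \<le> k" "k \<le> n"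
  shows "(f k, g k) \<in> S"
proof (rule ccontr)
  assume not_married: "(f k, g k) \<notin> S"
  have "w = f k \<or> w = f 0" if "(w, g k) \<in> S" for w
    using stable_marriage_partner_acceptable(2)[OF S that] k by (simp add: men_prefs_c)
  then have c_single: "{w. (w, g k) \<in> S} = {}"
    using not_married p_single unfolding single_def by blast
  have p_unmarried: "{m. (f 0, m) \<in> S} = {}"
    using p_single unfolding single_def by blast
  show False
    using stable_marriage_no_blocking_pair[OF S f_0_in_A g_in_B[of k]] k c_single p_unmarried
    by (simp add: women_prefs_p men_prefs_c del: upt_Suc)
qed

lemma stable_single_p_imp_disjoint:
  assumes S: "stable_marriage A B (women_prefs n f g x) (men_prefs n f g y) S"
    and p_single: "single S (f 0)"
  shows "\<not> (\<exists>i\<in>{1..n}. \<exists>j\<in>{1..n}. x (i, j) \<and> y (i, j))"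
proof
  assume "\<exists>i\<in>{1..n}. \<exists>j\<in>{1..n}. x (i, j) \<and> y (i, j)"
  then obtain i j where ij: "1 \<le> i" "i \<le> n" "1 \<le> j" "j \<le> n" "x (i, j)" "y (i, j)" by auto
  have married: "(f k, g k) \<in> S" if "1 \<le> k" "k \<le> n" for k
    using stable_single_p_marries_diagonal[OF S p_single that] .
  have a_partner: "{m. (f i, m) \<in> S} = {g i}"
    using married[OF ij(1,2)] stable_marriage_unique_partner(1)[OF S] by auto
  have False if "(w, g (n + j)) \<in> S" for w
  proof -
    have "w \<in> set (men_prefs n f g y (g (n + j)))"
      using stable_marriage_partner_acceptable(2)[OF S that] .
    then obtain i' where i': "1 \<le> i'" "i' \<le> n" "w = f i'"
      using ij by (auto simp: men_prefs_e simp del: upt_Suc)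
    then have "g i' = g (n + j)"
      using married stable_marriage_unique_partner(1)[OF S] that by blast
    then show False using g_eq_iff[of i' "n + j"] i' ij by auto
  qed
  then have e_single: "{w. (w, g (n + j)) \<in> S} = {}" by blast
  have "prefers (women_prefs n f g x (f i)) (g (n + j)) (g i)"
    unfolding women_prefs_a[OF ij(1,2)] by (rule prefers_append_last) (use ij in \<open>simp del: upt_Suc\<close>)
  then show False
    using stable_marriage_no_blocking_pair[OF S f_in_A[of i] g_in_B[of "n + j"]]
      a_partner e_single ij by (simp add: men_prefs_e del: upt_Suc)
qed

definition diagonal_marriage :: "('a \<times> 'a) set" where
  "diagonal_marriage = (\<lambda>i. (f i, g i)) ` {1..n}"

lemma diagonal_marriage_wife:
  assumes "k < 2 * n"
  shows "{m. (f k, m) \<in> diagonal_marriage} = (if 1 \<le> k \<and> k \<le> n then {g k} else {})"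
  using assms f_eq_iff by (auto simp: diagonal_marriage_def)

lemma diagonal_marriage_husband:
  assumes "l \<in> {1..2 * n}"
  shows "{w. (w, g l) \<in> diagonal_marriage} = (if l \<le> n then {f l} else {})"
  using assms g_eq_iff by (auto simp: diagonal_marriage_def)

lemma marriage_diagonal_marriage: "marriage A B diagonal_marriage"
proof -
  have "diagonal_marriage \<subseteq> A \<times> B"
    unfolding diagonal_marriage_def using f_in_A g_in_B by auto
  moreover have "m = m'" if "(w, m) \<in> diagonal_marriage" "(w, m') \<in> diagonal_marriage" for w m m'
    using that f_eq_iff unfolding diagonal_marriage_def by auto
  moreover have "w = w'" if "(w, m) \<in> diagonal_marriage" "(w', m) \<in> diagonal_marriage" for w w' m
    using that g_eq_iff unfolding diagonal_marriage_def by auto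
  ultimately show ?thesis unfolding marriage_def by blast
qed

lemma single_p_diagonal_marriage: "single diagonal_marriage (f 0)"
proof -
  have "f 0 \<noteq> f i" if "1 \<le> i" "i \<le> n" for i
    using f_eq_iff[of 0 i] that by simp
  then have "f 0 \<notin> Domain diagonal_marriage"
    unfolding diagonal_marriage_def by force
  moreover have "f 0 \<notin> Range diagonal_marriage"
    using f_0_in_A g_in_B sides_disjoint unfolding diagonal_marriage_def by auto
  ultimately show ?thesis unfolding single_def ..
qed

lemma diagonal_marriage_c_rejects_p:
  assumes "1 \<le> l" "l \<le> n"
  shows "\<not> prefers_to_situation (men_prefs n f g y (g l)) (f 0) {w. (w, g l) \<in> diagonal_marriage}"
proof -
  have "f l \<noteq> f 0" using f_eq_iff[of l 0] assms by simp
  then show ?thesis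
    using assms diagonal_marriage_husband[of l]
    by (simp add: men_prefs_c not_prefers_second_of_two)
qed

lemma diagonal_marriage_a_blocking_imp_intersect:
  assumes k: "1 \<le> k" "k \<le> n"
    and wife: "prefers_to_situation (women_prefs n f g x (f k)) m {m'. (f k, m') \<in> diagonal_marriage}"
    and husband: "prefers_to_situation (men_prefs n f g y m) (f k) {w. (w, m) \<in> diagonal_marriage}"
  shows "\<exists>i\<in>{1..n}. \<exists>j\<in>{1..n}. x (i, j) \<and> y (i, j)"
proof -
  let ?E = "map (\<lambda>j. g (n + j)) (filter (\<lambda>j. x (k, j)) [1..<n + 1])"
  have L: "women_prefs n f g x (f k) = ?E @ [g k]" by (rule women_prefs_a[OF k])
  have pref: "prefers (?E @ [g k]) m (g k)"
    using wife diagonal_marriage_wife[of k] k unfolding L by simp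
  then have "m \<in> set (?E @ [g k])" by (rule prefers_in_set)
  moreover have "distinct (women_prefs n f g x (f k))"
    by (rule profiles_distinct[OF women_prefs_profile f_in_A]) (use k in linarith)
  then have "\<not> prefers (?E @ [g k]) (g k) (g k)" unfolding L by (rule not_prefers_self)
  with pref have "m \<noteq> g k" by auto
  ultimately have "m \<in> set ?E" by simp
  then obtain j where j: "1 \<le> j" "j \<le> n" "x (k, j)" and m: "m = g (n + j)"
    by (auto simp del: upt_Suc)
  have "{w. (w, m) \<in> diagonal_marriage} = {}"
    using diagonal_marriage_husband[of "n + j"] j unfolding m by simp
  then have "f k \<in> set (men_prefs n f g y (g (n + j)))"
    using husband unfolding m by simp
  then obtain i where "1 \<le> i" "i \<le> n" "y (i, j)" "f k = f i"
    using j by (auto simp: men_prefs_e simp del: upt_Suc)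
  moreover from this have "i = k" using f_eq_iff[of k i] k by simp
  ultimately show ?thesis using k j by force
qed

lemma disjoint_imp_diagonal_marriage_stable:
  assumes disjoint: "\<not> (\<exists>i\<in>{1..n}. \<exists>j\<in>{1..n}. x (i, j) \<and> y (i, j))"
  shows "stable_marriage A B (women_prefs n f g x) (men_prefs n f g y) diagonal_marriage"
proof -
  have acceptable:
    "\<forall>(w, m)\<in>diagonal_marriage. m \<in> set (women_prefs n f g x w) \<and> w \<in> set (men_prefs n f g y m)"
    unfolding diagonal_marriage_def by (auto simp: women_prefs_a men_prefs_c)
  have no_blocking: False
    if w: "w \<in> A" and m: "m \<in> B"
      and wife: "prefers_to_situation (women_prefs n f g x w) m {m'. (w, m') \<in> diagonal_marriage}"
      and husband: "prefers_to_situation (men_prefs n f g y m) w {w'. (w', m) \<in> diagonal_marriage}"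
    for w m
  proof -
    obtain k where k: "k < 2 * n" "w = f k" using w by (rule A_cases)
    consider "k = 0" | "1 \<le> k" "k \<le> n" | "n < k" by linarith
    then show False
    proof cases
      case 1
      then obtain l where "1 \<le> l" "l \<le> n" "m = g l"
        using wife diagonal_marriage_wife[of 0] n_pos k by (auto simp: women_prefs_p simp del: upt_Suc)
      then show False using husband diagonal_marriage_c_rejects_p k 1 by blast
    next
      case 2
      then show False
        using diagonal_marriage_a_blocking_imp_intersect wife husband disjoint k by blast
    next
      case 3
      then show False using wife diagonal_marriage_wife[of k] k by (simp add: women_prefs_dummy)
    qed
  qed
  show ?thesis
    unfolding stable_marriage_def using marriage_diagonal_marriage acceptable no_blocking by blast
qed

theorem stable_single_p_iff_disjoint:
  "(\<exists>S. stable_marriage A B (women_prefs n f g x) (men_prefs n f g y) S \<and> single S (f 0))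
   \<longleftrightarrow> \<not> (\<exists>i\<in>{1..n}. \<exists>j\<in>{1..n}. x (i, j) \<and> y (i, j))"
  using stable_single_p_imp_disjoint disjoint_imp_diagonal_marriage_stable
    single_p_diagonal_marriage by blast

end

definition single_decides_DISJ :: "nat \<Rightarrow> 'a set \<Rightarrow> 'a set \<Rightarrow> 'a \<Rightarrow> bool" where
  "single_decides_DISJ n W M p \<longleftrightarrow> (\<exists>PrefW PrefM.
     (\<forall>x\<in>bitvecs (Dset n). PrefW x \<in> profiles W M) \<and>
     (\<forall>y\<in>bitvecs (Dset n). PrefM y \<in> profiles M W) \<and>
     (\<forall>x\<in>bitvecs (Dset n). \<forall>y\<in>bitvecs (Dset n).
        (\<exists>S. stable_marriage W M (PrefW x) (PrefM y) S \<and> single S p) \<longleftrightarrow> DISJ (Dset n) x y \<noteq> 0))"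

lemma single_decides_DISJ_woman:
  assumes "finite W" "finite M" "W \<inter> M = {}" "card W = 2 * n" "card M = 2 * n" "p \<in> W"
  shows "single_decides_DISJ n W M p"
proof -
  obtain f where f: "bij_betw f {0..<2 * n} W" "f 0 = p"
    using ex_bij_betw_nat_finite_fixing_zero[of W p] assms by auto
  obtain g where g: "bij_betw g {1..2 * n} M"
    using ex_bij_betw_nat_finite_1[of M] assms by auto
  have "1 \<le> n" using assms card_gt_0_iff[of W] by auto
  then interpret disj_gadget n f g W M
    using f g assms(3) by unfold_locales
  show ?thesis
    unfolding single_decides_DISJ_def
  proof (rule exI[of _ "women_prefs n f g"], rule exI[of _ "men_prefs n f g"], intro conjI ballI)
    fix x y assume x: "x \<in> bitvecs (Dset n)"
    show "(\<exists>S. stable_marriage W M (women_prefs n f g x) (men_prefs n f g y) S \<and> single S p)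
          \<longleftrightarrow> DISJ (Dset n) x y \<noteq> 0"
      unfolding DISJ_Dset_ne_0_iff[OF x] f(2)[symmetric] by (rule stable_single_p_iff_disjoint)
  qed (simp_all add: women_prefs_profile men_prefs_profile)
qed

lemma single_decides_DISJ_swap:
  assumes "single_decides_DISJ n M W p"
  shows "single_decides_DISJ n W M p"
proof -
  obtain PrefM PrefW where
    prefs: "\<forall>y\<in>bitvecs (Dset n). PrefM y \<in> profiles M W" "\<forall>x\<in>bitvecs (Dset n). PrefW x \<in> profiles W M"
    and decides: "\<forall>y\<in>bitvecs (Dset n). \<forall>x\<in>bitvecs (Dset n).
       (\<exists>S. stable_marriage M W (PrefM y) (PrefW x) S \<and> single S p) \<longleftrightarrow> DISJ (Dset n) y x \<noteq> 0"
    using assms unfolding single_decides_DISJ_def by blast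
  show ?thesis
    unfolding single_decides_DISJ_def
  proof (rule exI[of _ PrefW], rule exI[of _ PrefM], intro conjI ballI)
    fix x y assume x: "x \<in> bitvecs (Dset n)" and y: "y \<in> bitvecs (Dset n)"
    have "(\<exists>S. stable_marriage W M (PrefW x) (PrefM y) S \<and> single S p)
          \<longleftrightarrow> (\<exists>S. stable_marriage M W (PrefM y) (PrefW x) S \<and> single S p)"
      by (rule ex_stable_single_swap_sides)
    also have "\<dots> \<longleftrightarrow> DISJ (Dset n) y x \<noteq> 0" using decides x y by blast
    finally show "(\<exists>S. stable_marriage W M (PrefW x) (PrefM y) S \<and> single S p)
          \<longleftrightarrow> DISJ (Dset n) x y \<noteq> 0" by (simp only: DISJ_commute)
  qed (use prefs in blast)+
qed

theorem lemma21:
  fixes n :: nat and W M :: "'a set" and p :: 'a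
  assumes "finite W" "finite M" "W \<inter> M = {}"
    and "card W = 2 * n" "card M = 2 * n"
    and "p \<in> W \<union> M"
  shows "\<exists>PrefW PrefM.
           (\<forall>x\<in>bitvecs (Dset n). PrefW x \<in> profiles W M) \<and>
           (\<forall>y\<in>bitvecs (Dset n). PrefM y \<in> profiles M W) \<and>
           (\<forall>x\<in>bitvecs (Dset n). \<forall>y\<in>bitvecs (Dset n).
              (\<exists>S. stable_marriage W M (PrefW x) (PrefM y) S \<and> single S p)
              \<longleftrightarrow> DISJ (Dset n) x y \<noteq> 0)"
proof -
  have "single_decides_DISJ n W M p"
  proof (cases "p \<in> W")
    case True
    show ?thesis by (rule single_decides_DISJ_woman[OF assms(1-5) True])
  next
    case False
    then have "p \<in> M" using assms(6) by blast
    moreover have "M \<inter> W = {}" using assms(3) by blast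
    ultimately have "single_decides_DISJ n M W p"
      by (intro single_decides_DISJ_woman assms(2,1,5,4))
    then show ?thesis by (rule single_decides_DISJ_swap)
  qed
  then show ?thesis unfolding single_decides_DISJ_def .
qed

end
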